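(* Let $K$ be a field of characteristic $\neq2$, $\zeta_4$ a primitive fourth root of unity in a fixed algebraic closure of $K$, and let $a,b\in K^*$ with $a/b\in(K^* )^2$. Choose fourth roots of $a$ and $b$ and let $a,b:G_K\to\mathbb Z/4$ be the corresponding Kummer cocycles (via $\zeta_4$). Then $\binom a2+\binom b2:G_K\to\mathbb Z/2$ equals the cocycle $\{\sqrt b/\sqrt a\}:G_K\to\mathbb Z/2$, where $\sqrt b,\sqrt a$ are the squares of the chosen fourth roots of $b,a$.
   Context: The Kummer cocycle of $a$ is $g\mapsto a(g)$ with $g(\sqrt[4]a)/\sqrt[4]a=\zeta_4^{a(g)}$; $\binom a2$ is $g\mapsto\binom{a(g)}2\bmod2$ (well defined for $a(g)\in\mathbb Z/4$). For $z\in K^*$, $\{z\}:G_K\to\mathbb Z/2$ is the mod-$2$ Kummer cocycle $g\mapsto g(\sqrt z)/\sqrt z\in\mu_2=\mathbb Z/2$. *)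

theory Defs
  imports "HOL-Computational_Algebra.Polynomial"
begin

definition is_subfield :: "'a::field set \<Rightarrow> bool" where
  "is_subfield K \<longleftrightarrow> 0 \<in> K \<and> 1 \<in> K \<and>
     (\<forall>x\<in>K. \<forall>y\<in>K. x + y \<in> K \<and> x * y \<in> K) \<and>
     (\<forall>x\<in>K. - x \<in> K \<and> inverse x \<in> K)"

definition is_algebraic_closure_of :: "'a::field set \<Rightarrow> bool" where
  "is_algebraic_closure_of K \<longleftrightarrow>
     (\<forall>p::'a poly. degree p > 0 \<longrightarrow> (\<exists>x. poly p x = 0)) \<and>
     (\<forall>x::'a. \<exists>p. p \<noteq> 0 \<and> (\<forall>i. coeff p i \<in> K) \<and> poly p x = 0)"

text \<open>Elements of the absolute Galois group G_K, viewed as the K-automorphisms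
  of the fixed algebraic closure.\<close>
definition galois_elem :: "'a::field set \<Rightarrow> ('a \<Rightarrow> 'a) \<Rightarrow> bool" where
  "galois_elem K g \<longleftrightarrow> bij g \<and> (\<forall>x y. g (x + y) = g x + g y) \<and>
     (\<forall>x y. g (x * y) = g x * g y) \<and> (\<forall>x\<in>K. g x = x)"

definition primitive_4th_root :: "'a::field \<Rightarrow> bool" where
  "primitive_4th_root z \<longleftrightarrow> z ^ 4 = 1 \<and> (\<forall>k::nat. 0 < k \<and> k < 4 \<longrightarrow> z ^ k \<noteq> 1)"

text \<open>Mod-4 Kummer cocycle of a chosen fourth root \<alpha>: g(\<alpha>)/\<alpha> = \<zeta>^(value), value in Z/4 = {0..3}.\<close>
definition kummer4 :: "'a::field \<Rightarrow> 'a \<Rightarrow> ('a \<Rightarrow> 'a) \<Rightarrow> nat" where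
  "kummer4 \<zeta> \<alpha> g = (THE k. k < 4 \<and> g \<alpha> / \<alpha> = \<zeta> ^ k)"

definition binom2_mod2 :: "nat \<Rightarrow> nat" where
  "binom2_mod2 k = (k choose 2) mod 2"

text \<open>Mod-2 Kummer cocycle {z}: g \<mapsto> g(sqrt z)/sqrt z in mu_2 = Z/2 (0 for +1, 1 for -1).\<close>
definition kummer2 :: "'a::field \<Rightarrow> ('a \<Rightarrow> 'a) \<Rightarrow> nat" where
  "kummer2 z g = (let s = (SOME s. s ^ 2 = z) in if g s = s then 0 else 1)"

end

theory Submission
  imports Defs
begin

text \<open>Write \<open>g \<alpha> = \<zeta>\<^sup>i \<alpha>\<close>, \<open>g \<beta> = \<zeta>\<^sup>j \<beta>\<close> and \<open>r = \<beta> / \<alpha>\<close>. Since \<open>r\<^sup>4 = b / a\<close> is the square of an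
  element of \<open>K\<close>, already \<open>r\<^sup>2\<close> lies in \<open>K\<close>; so \<open>g\<close> fixes \<open>r\<^sup>2\<close>, i.e. \<open>\<zeta>\<^sup>2\<^sup>i = \<zeta>\<^sup>2\<^sup>j\<close> and \<open>i \<equiv> j (mod 2)\<close>.
  The cocycle \<open>{r\<^sup>2}\<close> is trivial at \<open>g\<close> iff \<open>g r = r\<close>, i.e. iff \<open>i = j\<close>, and for \<open>i, j \<in> {0..3}\<close> of
  equal parity \<open>(i choose 2) + (j choose 2)\<close> is even exactly when \<open>i = j\<close>.\<close>

lemma galois_elem_fixed:
  "galois_elem K g \<Longrightarrow> x \<in> K \<Longrightarrow> g x = x"
  by (simp add: galois_elem_def)

lemma galois_elem_mult:
  "galois_elem K g \<Longrightarrow> g (x * y) = g x * g y"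
  by (simp add: galois_elem_def)

lemma galois_elem_one:
  "galois_elem K g \<Longrightarrow> is_subfield K \<Longrightarrow> g 1 = 1"
  by (simp add: galois_elem_fixed is_subfield_def)

lemma galois_elem_power:
  assumes "galois_elem K g" "is_subfield K"
  shows "g (x ^ n) = g x ^ n"
  by (induction n) (simp_all add: galois_elem_one[OF assms] galois_elem_mult[OF assms(1)])

lemma galois_elem_minus:
  assumes "galois_elem K g" "is_subfield K"
  shows "g (- x) = - g x"
proof -
  have "g (- x) + g x = g 0"
    using assms(1) unfolding galois_elem_def by (metis add.left_inverse)
  also have "g 0 = 0"
    using assms by (simp add: galois_elem_fixed is_subfield_def)
  finally show ?thesis
    by (simp add: eq_neg_iff_add_eq_0)
qed

lemma galois_elem_divide:
  assumes "galois_elem K g" "is_subfield K" "y \<noteq> 0"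
  shows "g (x / y) = g x / g y"
proof -
  have "g y * g (inverse y) = 1"
    using assms by (metis galois_elem_mult galois_elem_one right_inverse)
  then have "g (inverse y) = inverse (g y)"
    by (metis inverse_unique)
  then show ?thesis
    using assms(1) by (simp add: divide_inverse galois_elem_mult)
qed

lemma subfield_square_root_mem:
  assumes "is_subfield K" "c \<in> K" "y\<^sup>2 = c\<^sup>2"
  shows "y \<in> K"
  using assms unfolding is_subfield_def by (auto simp: power2_eq_iff)

lemma primitive_4th_root_square:
  assumes "primitive_4th_root \<zeta>"
  shows "\<zeta>\<^sup>2 = -1"
proof -
  have "(\<zeta>\<^sup>2)\<^sup>2 = \<zeta> ^ (2 * 2)"
    by (rule power_mult[symmetric])
  then have "(\<zeta>\<^sup>2)\<^sup>2 = 1"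
    using assms unfolding primitive_4th_root_def by simp
  moreover have "\<zeta>\<^sup>2 \<noteq> 1"
    using assms unfolding primitive_4th_root_def by simp
  ultimately show ?thesis
    unfolding power2_eq_1_iff by blast
qed

lemma primitive_4th_root_minus_one_neq_one:
  "(-1::'a) \<noteq> 1" if "primitive_4th_root (\<zeta>::'a::field)"
proof
  assume "(-1::'a) = 1"
  then have "\<zeta>\<^sup>2 = 1"
    using primitive_4th_root_square[of \<zeta>] that by simp
  then show False
    using that unfolding primitive_4th_root_def by (auto dest: spec[of _ 2])
qed

lemma primitive_4th_root_power_inj:
  assumes "primitive_4th_root \<zeta>" "k < 4" "l < 4" "\<zeta> ^ k = \<zeta> ^ l"
  shows "k = l"
proof -
  have \<zeta>: "\<zeta> \<noteq> 0" "\<And>d. 0 < d \<Longrightarrow> d < 4 \<Longrightarrow> \<zeta> ^ d \<noteq> 1"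
    using assms(1) unfolding primitive_4th_root_def by auto
  have "m = n" if "m < 4" "n < 4" "m \<le> n" "\<zeta> ^ m = \<zeta> ^ n" for m n
  proof -
    have "\<zeta> ^ m * \<zeta> ^ (n - m) = \<zeta> ^ n"
      using that(3) by (simp flip: power_add)
    then have "\<zeta> ^ m * \<zeta> ^ (n - m) = \<zeta> ^ m * 1"
      using that(4) by simp
    then have "\<zeta> ^ (n - m) = 1"
      using \<zeta>(1) by (metis mult_left_cancel power_not_zero)
    then show "m = n"
      using \<zeta>(2)[of "n - m"] that by linarith
  qed
  then show ?thesis
    using assms(2-4) by (metis nat_le_linear)
qed

lemma fourth_root_of_unity_eq_power:
  assumes "primitive_4th_root \<zeta>" "u ^ 4 = 1"
  obtains k where "k < 4" "u = \<zeta> ^ k"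
proof -
  have \<zeta>2: "\<zeta>\<^sup>2 = -1"
    using assms(1) by (rule primitive_4th_root_square)
  have "(u - 1) * (u + 1) * ((u - \<zeta>) * (u + \<zeta>)) = (u\<^sup>2 - 1) * (u\<^sup>2 - \<zeta>\<^sup>2)"
    by (simp add: algebra_simps power2_eq_square)
  also have "\<dots> = u ^ 4 - 1"
    using \<zeta>2 by (simp add: algebra_simps power2_eq_square power4_eq_xxxx)
  finally have "u = 1 \<or> u = -1 \<or> u = \<zeta> \<or> u = - \<zeta>"
    using assms(2) by (auto simp: eq_neg_iff_add_eq_0)
  moreover have "\<zeta> ^ 3 = - \<zeta>"
    using \<zeta>2 by (simp add: power3_eq_cube power2_eq_square)
  ultimately show ?thesis
    using that[of 0] that[of 1] that[of 2] that[of 3] \<zeta>2 by auto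
qed

lemma kummer4_eqI:
  assumes "primitive_4th_root \<zeta>" "k < 4" "g x / x = \<zeta> ^ k"
  shows "kummer4 \<zeta> x g = k"
  unfolding kummer4_def
  using assms primitive_4th_root_power_inj by (intro the_equality) auto

lemma kummer4_galois_elem:
  assumes "galois_elem K g" "is_subfield K" "primitive_4th_root \<zeta>" "x \<noteq> 0" "x ^ 4 \<in> K"
  shows "kummer4 \<zeta> x g < 4" "g x = \<zeta> ^ kummer4 \<zeta> x g * x"
proof -
  have "(g x / x) ^ 4 = g (x ^ 4) / x ^ 4"
    using assms(1,2) by (simp add: galois_elem_power power_divide)
  also have "\<dots> = 1"
    using assms by (simp add: galois_elem_fixed)
  finally obtain k where "k < 4" "g x / x = \<zeta> ^ k"
    using assms(3) fourth_root_of_unity_eq_power by blast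
  then show "kummer4 \<zeta> x g < 4" "g x = \<zeta> ^ kummer4 \<zeta> x g * x"
    using kummer4_eqI[OF assms(3)] assms(4) by (auto simp: field_simps)
qed

lemma primitive_4th_root_parity:
  assumes "primitive_4th_root \<zeta>" "(\<zeta> ^ i)\<^sup>2 = (\<zeta> ^ j)\<^sup>2"
  shows "even i \<longleftrightarrow> even j"
proof -
  have "(\<zeta> ^ k)\<^sup>2 = (-1) ^ k" for k
    using primitive_4th_root_square[OF assms(1)] by (metis power_mult mult.commute)
  then have "(-1::'a) ^ i = (-1) ^ j"
    using assms(2) by simp
  then show ?thesis
    using primitive_4th_root_minus_one_neq_one[OF assms(1)]
    by (auto simp: minus_one_power_iff split: if_splits)
qed

lemma kummer2_square:
  assumes "g (- r) = - g r"
  shows "kummer2 (r\<^sup>2) g = (if g r = r then 0 else 1)"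
proof -
  define s where "s = (SOME s. s\<^sup>2 = r\<^sup>2)"
  have "s\<^sup>2 = r\<^sup>2"
    unfolding s_def by (rule someI) (rule refl)
  then have "s = r \<or> s = - r"
    by (simp add: power2_eq_iff)
  then have "g s = s \<longleftrightarrow> g r = r"
    using assms by auto
  then show ?thesis
    unfolding kummer2_def Let_def s_def[symmetric] by simp
qed

lemma binom2_mod2_sum_same_parity:
  assumes "i < 4" "j < 4" "even i \<longleftrightarrow> even j"
  shows "(binom2_mod2 i + binom2_mod2 j) mod 2 = (if i = j then 0 else 1)"
proof -
  have "i \<in> {0, 1, 2, 3}" "j \<in> {0, 1, 2, 3}"
    using assms(1,2) by auto
  then show ?thesis
    using assms(3) by (auto simp: binom2_mod2_def choose_two)
qed

theorem lemma12p6: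
  fixes K :: "'a::field set" and \<zeta> a b \<alpha> \<beta> :: 'a
  assumes "is_subfield K"
    and "is_algebraic_closure_of K"
    and "(2::'a) \<noteq> 0"
    and "primitive_4th_root \<zeta>"
    and "a \<in> K" "b \<in> K" "a \<noteq> 0" "b \<noteq> 0"
    and "\<exists>c\<in>K. c \<noteq> 0 \<and> a / b = c ^ 2"
    and "\<alpha> ^ 4 = a" "\<beta> ^ 4 = b"
  shows "\<forall>g. galois_elem K g \<longrightarrow>
    (binom2_mod2 (kummer4 \<zeta> \<alpha> g) + binom2_mod2 (kummer4 \<zeta> \<beta> g)) mod 2
      = kummer2 (\<beta> ^ 2 / \<alpha> ^ 2) g"
proof (intro allI impI)
  fix g assume g: "galois_elem K g"
  have \<zeta>0: "\<zeta> \<noteq> 0"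
    using assms(4) unfolding primitive_4th_root_def by auto
  have \<alpha>0: "\<alpha> \<noteq> 0" and \<beta>0: "\<beta> \<noteq> 0"
    using assms(7,8,10,11) by auto
  define i j where "i = kummer4 \<zeta> \<alpha> g" and "j = kummer4 \<zeta> \<beta> g"
  note kummer = kummer4_galois_elem[OF g assms(1,4)]
  have i: "i < 4" "g \<alpha> = \<zeta> ^ i * \<alpha>" and j: "j < 4" "g \<beta> = \<zeta> ^ j * \<beta>"
    unfolding i_def j_def using kummer[OF \<alpha>0] kummer[OF \<beta>0] assms(5,6,10,11) by auto
  define r where "r = \<beta> / \<alpha>"
  have gr: "g r = \<zeta> ^ j / \<zeta> ^ i * r"
    using galois_elem_divide[OF g assms(1) \<alpha>0] i j \<alpha>0 unfolding r_def by simp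
  obtain c where c: "c \<in> K" "c \<noteq> 0" "a / b = c\<^sup>2"
    using assms(9) by blast
  have "(r\<^sup>2)\<^sup>2 = (inverse c)\<^sup>2"
    using c(3) assms(7,8,10,11)
    by (simp add: r_def field_simps flip: power_mult)
  then have "r\<^sup>2 \<in> K"
    using assms(1) c(1) by (auto intro: subfield_square_root_mem simp: is_subfield_def)
  then have "(g r)\<^sup>2 = r\<^sup>2"
    using galois_elem_power[OF g assms(1), of r 2] galois_elem_fixed[OF g] by simp
  then have "(\<zeta> ^ j / \<zeta> ^ i * r)\<^sup>2 = r\<^sup>2"
    unfolding gr .
  then have "(\<zeta> ^ i)\<^sup>2 = (\<zeta> ^ j)\<^sup>2"
    using \<alpha>0 \<beta>0 \<zeta>0 by (simp add: r_def field_simps)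
  then have parity: "even i \<longleftrightarrow> even j"
    by (rule primitive_4th_root_parity[OF assms(4)])
  have "r \<noteq> 0"
    using \<alpha>0 \<beta>0 by (simp add: r_def)
  then have "g r = r \<longleftrightarrow> \<zeta> ^ i = \<zeta> ^ j"
    using gr \<zeta>0 by (auto simp: field_simps)
  also have "\<dots> \<longleftrightarrow> i = j"
    using primitive_4th_root_power_inj[OF assms(4) i(1) j(1)] by blast
  finally have "g r = r \<longleftrightarrow> i = j" .
  moreover have "\<beta> ^ 2 / \<alpha> ^ 2 = r\<^sup>2"
    by (simp add: r_def power_divide)
  ultimately show "(binom2_mod2 (kummer4 \<zeta> \<alpha> g) + binom2_mod2 (kummer4 \<zeta> \<beta> g)) mod 2
      = kummer2 (\<beta> ^ 2 / \<alpha> ^ 2) g"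
    using binom2_mod2_sum_same_parity[OF i(1) j(1) parity]
      kummer2_square[of g r, OF galois_elem_minus[OF g assms(1)]]
    by (simp add: i_def j_def)
qed

end
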